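(* Let $\lambda>0$ be the wavelength, let $N\ge 1$ be an integer, let $\delta=\lambda/2$, let $\Delta\ge 0$, and set $\overline{\Delta}=\frac{\Delta+(N-1)\delta}{2}$. Let $z>0$ and $F>0$ with $z\neq F$, and define $$\hat{G}_2=\frac{1}{(2N\delta^2)^2}\Bigg|\int_{-\frac{N\delta}{2}}^{\frac{N\delta}{2}}\int_{-\frac{\delta}{2}}^{\frac{\delta}{2}} e^{\mathrm{i}\frac{2\pi}{\lambda}\left(\frac{(x-\overline{\Delta})^2}{2F}+\frac{y^2}{2F}\right)}e^{-\mathrm{i}\frac{2\pi}{\lambda}\left(\frac{(x-\overline{\Delta})^2}{2z}+\frac{y^2}{2z}\right)}dy\,dx$$ $$\qquad\qquad+\int_{-\frac{N\delta}{2}}^{\frac{N\delta}{2}}\int_{-\frac{\delta}{2}}^{\frac{\delta}{2}} e^{\mathrm{i}\frac{2\pi}{\lambda}\left(\frac{(x+\overline{\Delta})^2}{2F}+\frac{y^2}{2F}\right)}e^{-\mathrm{i}\frac{2\pi}{\lambda}\left(\frac{(x+\overline{\Delta})^2}{2z}+\frac{y^2}{2z}\right)}dy\,dx\Bigg|^2 .$$ Let $z_{\rm eff}=\frac{Fz}{|F-z|}$, $a=\frac{\lambda}{8z_{\rm eff}}$, $\beta_1=\sqrt{a}\,N+\sqrt{\frac{2}{\lambda z_{\rm eff}}}\,\overline{\Delta}$ and $\beta_2=\sqrt{a}\,N-\sqrt{\frac{2}{\lambda z_{\rm eff}}}\,\overline{\Delta}$. Then $$\hat{G}_2=\frac{1}{(2Na)^2}\left(C^2(\sqrt{a})+S^2(\sqrt{a})\right)\left(\left(C(\beta_1)+C(\beta_2)\right)^2+\left(S(\beta_1)+S(\beta_2)\right)^2\right),$$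 where $C$ and $S$ are the Fresnel integrals.
   Context: The Fresnel integrals are $C(u)=\int_0^u\cos\left(\frac{\pi t^2}{2}\right)dt$ and $S(u)=\int_0^u\sin\left(\frac{\pi t^2}{2}\right)dt$; $\mathrm{i}$ is the imaginary unit. Physically, $\hat{G}_2$ is the (Fresnel-approximated) normalized array gain of a modular linear array consisting of two collinear uniform linear arrays of $N$ antennas each (antenna side $\delta$) along the $x$-axis separated by $\Delta$, receiving from a transmitter at $(0,0,z)$ with matched filtering focused at $(0,0,F)$. *)

theory Defs
  imports "HOL-Analysis.Analysis"
begin

text \<open>Fresnel integrals, as oriented (interval) Lebesgue integrals, so that
  they are also correct (odd) for negative arguments.\<close>
definition fresnel_C :: "real \<Rightarrow> real" where
  "fresnel_C u = (LBINT t=0..u. cos (pi * t\<^sup>2 / 2))"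

definition fresnel_S :: "real \<Rightarrow> real" where
  "fresnel_S u = (LBINT t=0..u. sin (pi * t\<^sup>2 / 2))"

text \<open>Integrand of one module: phase of the matched filter focused at F times
  the conjugate phase of the incoming wave from distance z, module centre shifted by c.\<close>
definition module_phase :: "real \<Rightarrow> real \<Rightarrow> real \<Rightarrow> real \<Rightarrow> real \<Rightarrow> real \<Rightarrow> complex" where
  "module_phase lam F z c x y =
     exp (\<i> * complex_of_real (2 * pi / lam * ((x - c)\<^sup>2 / (2 * F) + y\<^sup>2 / (2 * F))))
   * exp (- \<i> * complex_of_real (2 * pi / lam * ((x - c)\<^sup>2 / (2 * z) + y\<^sup>2 / (2 * z))))"

definition G2_hat :: "real \<Rightarrow> nat \<Rightarrow> real \<Rightarrow> real \<Rightarrow> real \<Rightarrow> real \<Rightarrow> real" where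
  "G2_hat lam N delta Dbar F z =
     1 / (2 * real N * delta\<^sup>2)\<^sup>2 *
     (cmod (integral {- (real N * delta / 2) .. real N * delta / 2}
              (\<lambda>x. integral {- (delta / 2) .. delta / 2} (\<lambda>y. module_phase lam F z Dbar x y))
          + integral {- (real N * delta / 2) .. real N * delta / 2}
              (\<lambda>x. integral {- (delta / 2) .. delta / 2} (\<lambda>y. module_phase lam F z (- Dbar) x y))))\<^sup>2"

end

theory Submission imports Defs begin

text \<open>Since \<open>1/F - 1/z\<close> is a common factor, the phase of a module splits into a quadratic
  phase in \<open>x\<close> times one in \<open>y\<close>, so both double integrals factorise into one-dimensional
  integrals of \<open>cis (\<kappa> u\<^sup>2)\<close>.  After the scaling \<open>u \<mapsto> r u\<close> with \<open>\<kappa> = sgn \<kappa> \<cdot> \<pi> r\<^sup>2 / 2\<close>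
  these integrals are differences of the complex Fresnel function \<open>C + i sgn \<kappa> S\<close>, by the
  fundamental theorem of calculus.  The oddness of \<open>C\<close> and \<open>S\<close> turns the integrals over
  symmetric intervals into the sums appearing in the formula, and the gain is the squared
  modulus of their product.\<close>

lemma has_real_derivative_LBINT_0:
  fixes f :: "real \<Rightarrow> real"
  assumes "continuous_on UNIV f"
  shows "((\<lambda>u. LBINT t=0..u. f t) has_real_derivative f x) (at x)"
proof -
  let ?b = "\<bar>x\<bar> + 1"
  have "((\<lambda>u. LBINT t=0..u. f t) has_vector_derivative f x) (at x within {-?b..?b})"
    using interval_integral_FTC2[of "-?b" 0 ?b f x] assms
    by (simp add: zero_ereal_def[symmetric] continuous_on_subset abs_le_iff)
  moreover have "x \<in> {-?b<..<?b}" by auto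
  ultimately have "((\<lambda>u. LBINT t=0..u. f t) has_vector_derivative f x) (at x)"
    by (metis greaterThanLessThan_subseteq_atLeastAtMost_iff has_vector_derivative_within_subset
        has_vector_derivative_within_open open_greaterThanLessThan order_refl)
  then show ?thesis by (simp add: has_real_derivative_iff_has_vector_derivative)
qed

lemma odd_if_has_real_derivative_even:
  fixes f g :: "real \<Rightarrow> real"
  assumes deriv: "\<And>x. (f has_real_derivative g x) (at x)"
    and even: "\<And>x. g (- x) = g x" and "f 0 = 0"
  shows "f (- u) = - f u"
proof -
  have "((\<lambda>u. f u + f (- u)) has_real_derivative 0) (at x)" for x
  proof -
    have "((\<lambda>u. f (- u)) has_real_derivative g (- x) * (- 1)) (at x)"
      by (rule DERIV_chain2[OF deriv]) (auto intro!: derivative_eq_intros)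
    then show ?thesis using DERIV_add[OF deriv] even by fastforce
  qed
  then have "f u + f (- u) = f 0 + f (- 0)"
    by (rule DERIV_isconst_all[rule_format])
  then show ?thesis using \<open>f 0 = 0\<close> by simp
qed

lemma fresnel_C_has_real_derivative: "(fresnel_C has_real_derivative cos (pi * x\<^sup>2 / 2)) (at x)"
  unfolding fresnel_C_def[abs_def]
  by (rule has_real_derivative_LBINT_0) (auto intro!: continuous_intros)

lemma fresnel_S_has_real_derivative: "(fresnel_S has_real_derivative sin (pi * x\<^sup>2 / 2)) (at x)"
  unfolding fresnel_S_def[abs_def]
  by (rule has_real_derivative_LBINT_0) (auto intro!: continuous_intros)

lemma fresnel_C_minus: "fresnel_C (- u) = - fresnel_C u"
  by (rule odd_if_has_real_derivative_even[OF fresnel_C_has_real_derivative])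
     (simp_all add: fresnel_C_def zero_ereal_def[symmetric])

lemma fresnel_S_minus: "fresnel_S (- u) = - fresnel_S u"
  by (rule odd_if_has_real_derivative_even[OF fresnel_S_has_real_derivative])
     (simp_all add: fresnel_S_def zero_ereal_def[symmetric])

definition fresnel_cis :: "real \<Rightarrow> real \<Rightarrow> complex" where
  "fresnel_cis s u = Complex (fresnel_C u) (s * fresnel_S u)"

lemma fresnel_cis_minus: "fresnel_cis s (- u) = - fresnel_cis s u"
  by (simp add: fresnel_cis_def complex_eq_iff fresnel_C_minus fresnel_S_minus)

lemma norm_Complex_sign_mult_power2:
  assumes "\<bar>s\<bar> = 1"
  shows "(cmod (Complex a (s * b)))\<^sup>2 = a\<^sup>2 + b\<^sup>2"
proof -
  have "s\<^sup>2 = 1" using assms by (metis power2_abs power_one)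
  then show ?thesis by (simp add: cmod_power2 power_mult_distrib)
qed

lemma norm_fresnel_cis_power2:
  assumes "\<bar>s\<bar> = 1"
  shows "(cmod (fresnel_cis s u))\<^sup>2 = (fresnel_C u)\<^sup>2 + (fresnel_S u)\<^sup>2"
  unfolding fresnel_cis_def using assms by (rule norm_Complex_sign_mult_power2)

lemma norm_add_fresnel_cis_power2:
  assumes "\<bar>s\<bar> = 1"
  shows "(cmod (fresnel_cis s u + fresnel_cis s v))\<^sup>2
       = (fresnel_C u + fresnel_C v)\<^sup>2 + (fresnel_S u + fresnel_S v)\<^sup>2"
proof -
  have "fresnel_cis s u + fresnel_cis s v = Complex (fresnel_C u + fresnel_C v) (s * (fresnel_S u + fresnel_S v))"
    by (simp add: fresnel_cis_def complex_eq_iff algebra_simps)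
  then show ?thesis using norm_Complex_sign_mult_power2[OF assms] by simp
qed

lemma cis_sign_mult:
  assumes "\<bar>s\<bar> = 1"
  shows "cis (s * t) = Complex (cos t) (s * sin t)"
proof -
  have "s = 1 \<or> s = -1" using assms by auto
  then show ?thesis by (auto simp: complex_eq_iff)
qed

lemma fresnel_cis_has_vector_derivative:
  assumes "\<bar>s\<bar> = 1"
  shows "(fresnel_cis s has_vector_derivative cis (s * (pi * u\<^sup>2 / 2))) (at u)"
  unfolding fresnel_cis_def[abs_def] cis_sign_mult[OF assms] Complex_eq
  by (auto intro!: derivative_eq_intros has_vector_derivative_of_real
      fresnel_C_has_real_derivative fresnel_S_has_real_derivative)

lemma has_integral_cis_quadratic:
  assumes "\<bar>s\<bar> = 1" "r \<noteq> 0" "p \<le> q"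
  shows "((\<lambda>x. cis (s * (pi * ((x - c) * r)\<^sup>2 / 2))) has_integral
           (fresnel_cis s ((q - c) * r) - fresnel_cis s ((p - c) * r)) / r) {p..q}"
proof -
  have "((\<lambda>x. fresnel_cis s ((x - c) * r) / r) has_vector_derivative
          cis (s * (pi * ((x - c) * r)\<^sup>2 / 2))) (at x)" for x
  proof -
    have "((\<lambda>x. (x - c) * r) has_vector_derivative r) (at x)"
      by (auto intro!: derivative_eq_intros simp: has_real_derivative_iff_has_vector_derivative[symmetric])
    from vector_diff_chain_at[OF this fresnel_cis_has_vector_derivative[OF assms(1)]]
    have "((\<lambda>x. fresnel_cis s ((x - c) * r)) has_vector_derivative
            r *\<^sub>R cis (s * (pi * ((x - c) * r)\<^sup>2 / 2))) (at x)"
      by (simp add: o_def)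
    from has_vector_derivative_mult_left[OF this, of "1 / complex_of_real r"]
    show ?thesis using assms(2) by (simp add: scaleR_conv_of_real)
  qed
  from fundamental_theorem_of_calculus[OF assms(3) has_vector_derivative_at_within[OF this]]
  show ?thesis by (simp add: diff_divide_distrib)
qed

lemma integral_cis_quadratic_symmetric:
  assumes "\<bar>s\<bar> = 1" "r \<noteq> 0" "0 \<le> h" "\<kappa> = s * pi * r\<^sup>2 / 2"
  shows "integral {-h..h} (\<lambda>x. cis (\<kappa> * (x - c)\<^sup>2))
       = (fresnel_cis s ((h - c) * r) + fresnel_cis s ((h + c) * r)) / r"
proof -
  have phase: "\<kappa> * (x - c)\<^sup>2 = s * (pi * ((x - c) * r)\<^sup>2 / 2)" for x
    by (simp add: assms(4) power_mult_distrib)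
  have "(- h - c) * r = - ((h + c) * r)"
    by (simp add: algebra_simps)
  then show ?thesis
    using integral_unique[OF has_integral_cis_quadratic[OF assms(1,2), of "-h" h c]] assms(3)
    by (simp only: phase) (simp add: fresnel_cis_minus)
qed

lemma module_phase_eq_cis:
  assumes "lam \<noteq> 0" "F \<noteq> 0" "z \<noteq> 0"
  shows "module_phase lam F z c x y
       = cis (pi * (z - F) / (lam * F * z) * (x - c)\<^sup>2) * cis (pi * (z - F) / (lam * F * z) * y\<^sup>2)"
proof -
  have "exp (\<i> * complex_of_real t) = cis t" "exp (- \<i> * complex_of_real t) = cis (- t)" for t
    by (simp_all add: cis_conv_exp)
  then have "module_phase lam F z c x y
      = cis (2 * pi / lam * ((x - c)\<^sup>2 / (2 * F) + y\<^sup>2 / (2 * F))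
             - 2 * pi / lam * ((x - c)\<^sup>2 / (2 * z) + y\<^sup>2 / (2 * z)))"
    unfolding module_phase_def by (simp only: cis_mult diff_conv_add_uminus)
  also have "\<dots> = cis (pi * (z - F) / (lam * F * z) * (x - c)\<^sup>2 + pi * (z - F) / (lam * F * z) * y\<^sup>2)"
    using assms by (intro arg_cong[where f = cis]) (simp add: field_simps)
  finally show ?thesis by (simp add: cis_mult)
qed

lemma integral_integral_module_phase:
  assumes "lam \<noteq> 0" "F \<noteq> 0" "z \<noteq> 0"
    and "\<bar>s\<bar> = 1" "r \<noteq> 0" "s * r\<^sup>2 = 2 * (z - F) / (lam * F * z)"
    and "0 \<le> h" "0 \<le> w"
  shows "integral {-h..h} (\<lambda>x. integral {-w..w} (\<lambda>y. module_phase lam F z c x y))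
       = 2 * fresnel_cis s (w * r) * (fresnel_cis s ((h - c) * r) + fresnel_cis s ((h + c) * r)) / r\<^sup>2"
proof -
  define \<kappa> where "\<kappa> = pi * (z - F) / (lam * F * z)"
  have "\<kappa> = pi / 2 * (s * r\<^sup>2)"
    using assms(1-3) by (simp add: \<kappa>_def assms(6) field_simps)
  then have \<kappa>: "\<kappa> = s * pi * r\<^sup>2 / 2"
    by simp
  have inner: "integral {-w..w} (\<lambda>y. module_phase lam F z c x y)
      = cis (\<kappa> * (x - c)\<^sup>2) * (2 * fresnel_cis s (w * r) / r)" for x
    using integral_cis_quadratic_symmetric[OF assms(4,5,8) \<kappa>, of 0]
    by (simp add: module_phase_eq_cis[OF assms(1-3)] \<kappa>_def[symmetric])
  show ?thesis
    using integral_cis_quadratic_symmetric[OF assms(4,5,7) \<kappa>, of c] assms(5)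
    by (simp add: inner power2_eq_square)
qed

lemma G2_hat_eq_fresnel:
  fixes N :: nat and D :: real
  assumes "lam \<noteq> 0" "F \<noteq> 0" "z \<noteq> 0"
    and "\<bar>s\<bar> = 1" "r \<noteq> 0" "s * r\<^sup>2 = 2 * (z - F) / (lam * F * z)"
    and "0 \<le> delta"
  defines "b1 \<equiv> (real N * delta / 2 + D) * r" and "b2 \<equiv> (real N * delta / 2 - D) * r"
  shows "G2_hat lam N delta D F z
       = 1 / (2 * real N * (delta / 2 * r)\<^sup>2)\<^sup>2
         * ((fresnel_C (delta / 2 * r))\<^sup>2 + (fresnel_S (delta / 2 * r))\<^sup>2)
         * ((fresnel_C b1 + fresnel_C b2)\<^sup>2 + (fresnel_S b1 + fresnel_S b2)\<^sup>2)"
proof -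
  have "0 \<le> real N * delta / 2" "0 \<le> delta / 2"
    using assms(7) by simp_all
  note module_integral = integral_integral_module_phase[OF assms(1-6) this]
  have "integral {- (real N * delta / 2) .. real N * delta / 2}
          (\<lambda>x. integral {- (delta / 2) .. delta / 2} (\<lambda>y. module_phase lam F z D x y))
      + integral {- (real N * delta / 2) .. real N * delta / 2}
          (\<lambda>x. integral {- (delta / 2) .. delta / 2} (\<lambda>y. module_phase lam F z (- D) x y))
      = 4 / r\<^sup>2 * (fresnel_cis s (delta / 2 * r) * (fresnel_cis s b1 + fresnel_cis s b2))"
    unfolding module_integral b1_def b2_def by (simp add: add_divide_distrib[symmetric] algebra_simps)
  then have "G2_hat lam N delta D F z
      = 1 / (2 * real N * delta\<^sup>2)\<^sup>2 * (4 / r\<^sup>2)\<^sup>2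
        * ((cmod (fresnel_cis s (delta / 2 * r)))\<^sup>2 * (cmod (fresnel_cis s b1 + fresnel_cis s b2))\<^sup>2)"
    unfolding G2_hat_def by (simp add: norm_mult norm_divide norm_power power_mult_distrib power_divide)
  also have "1 / (2 * real N * delta\<^sup>2)\<^sup>2 * (4 / r\<^sup>2)\<^sup>2 = 1 / (2 * real N * (delta / 2 * r)\<^sup>2)\<^sup>2"
    using assms(5) by (simp add: field_simps power2_eq_square)
  finally show ?thesis
    by (simp only: norm_fresnel_cis_power2 norm_add_fresnel_cis_power2 assms(4) mult.assoc)
qed

theorem theorem2:
  fixes lam Delta z F :: real and N :: nat
  assumes "lam > 0" and "N \<ge> 1" and "Delta \<ge> 0"
    and "z > 0" and "F > 0" and "z \<noteq> F"
  defines "delta \<equiv> lam / 2"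
  defines "Dbar \<equiv> (Delta + (real N - 1) * delta) / 2"
  defines "zeff \<equiv> F * z / \<bar>F - z\<bar>"
  defines "a \<equiv> lam / (8 * zeff)"
  defines "beta1 \<equiv> sqrt a * real N + sqrt (2 / (lam * zeff)) * Dbar"
  defines "beta2 \<equiv> sqrt a * real N - sqrt (2 / (lam * zeff)) * Dbar"
  shows "G2_hat lam N delta Dbar F z =
           1 / (2 * real N * a)\<^sup>2
           * ((fresnel_C (sqrt a))\<^sup>2 + (fresnel_S (sqrt a))\<^sup>2)
           * ((fresnel_C beta1 + fresnel_C beta2)\<^sup>2 + (fresnel_S beta1 + fresnel_S beta2)\<^sup>2)"
proof -
  define r where "r = sqrt (2 / (lam * zeff))"
  define s where "s = sgn (z - F)"
  have "zeff > 0"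
    using assms(4-6) by (simp add: zeff_def)
  then have "r > 0" and r2: "r\<^sup>2 = 2 / (lam * zeff)"
    using assms(1) by (simp_all add: r_def)
  have "\<bar>s\<bar> = 1"
    using assms(6) by (simp add: s_def)
  have "s * r\<^sup>2 = 2 * (s * \<bar>z - F\<bar>) / (lam * F * z)"
    using assms(1,4-6) by (simp add: r2 zeff_def abs_minus_commute field_simps)
  then have sr2: "s * r\<^sup>2 = 2 * (z - F) / (lam * F * z)"
    by (simp add: s_def sgn_mult_abs)
  have a_eq: "a = (delta / 2 * r)\<^sup>2"
    using assms(1) \<open>zeff > 0\<close> unfolding power_mult_distrib r2
    by (simp add: a_def delta_def field_simps power2_eq_square)
  then have sqrt_a: "sqrt a = delta / 2 * r"
    using assms(1) \<open>r > 0\<close> by (simp add: delta_def)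
  have beta1: "beta1 = (real N * delta / 2 + Dbar) * r"
    and beta2: "beta2 = (real N * delta / 2 - Dbar) * r"
    by (simp_all add: beta1_def beta2_def r_def[symmetric] sqrt_a algebra_simps)
  show ?thesis
    using G2_hat_eq_fresnel[OF _ _ _ \<open>\<bar>s\<bar> = 1\<close> _ sr2, of delta N Dbar] assms(1,4,5) \<open>r > 0\<close>
    unfolding sqrt_a beta1 beta2 a_eq by (simp add: delta_def)
qed

end
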